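(* (i) If $f(z)=z+\sum_{n=2}^\infty a_nz^n\in\mathcal{A}$ satisfies $\sum_{n=2}^\infty(2n-1)|a_n|\le1$, then $f\in\mathcal{S}^*_{car}$. (ii) For $n\in\{2,3,\ldots\}$ and $a_n\in\mathbb{C}$, the function $f_n(z)=z+a_nz^n$ belongs to $\mathcal{S}^*_{car}$ if and only if $|a_n|\le 1/(2n-1)$.
   Context: $\mathbb{D}=\{z:|z|<1\}$; $\mathcal{A}$ is the class of analytic $f$ on $\mathbb{D}$ with $f(0)=0$, $f'(0)=1$. $F\prec G$ means $F=G\circ w$ for an analytic $w:\mathbb{D}\to\mathbb{D}$ with $w(0)=0$. $\mathcal{S}^*_{car}$ is the class of $f\in\mathcal{A}$ with $zf'(z)/f(z)\prec 1+z+z^2/2$ in $\mathbb{D}$. *)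

theory Defs
  imports "HOL-Analysis.Analysis"
begin

definition class_A :: "(complex \<Rightarrow> complex) set" where
  "class_A = {f. f holomorphic_on ball 0 1 \<and> f 0 = 0 \<and> deriv f 0 = 1}"

definition subordinate :: "(complex \<Rightarrow> complex) \<Rightarrow> (complex \<Rightarrow> complex) \<Rightarrow> bool" where
  "subordinate F G \<longleftrightarrow>
     (\<exists>w. w holomorphic_on ball 0 1 \<and> w ` ball 0 1 \<subseteq> ball 0 1 \<and> w 0 = 0 \<and>
          (\<forall>z\<in>ball 0 1. F z = G (w z)))"

text \<open>The function z f'(z)/f(z), with its removable value 1 at the origin.\<close>
definition log_deriv_quot :: "(complex \<Rightarrow> complex) \<Rightarrow> complex \<Rightarrow> complex" where
  "log_deriv_quot f z = (if z = 0 then 1 else z * deriv f z / f z)"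

definition S_car :: "(complex \<Rightarrow> complex) set" where
  "S_car = {f. f \<in> class_A \<and> (\<forall>z\<in>ball 0 1 - {0}. f z \<noteq> 0) \<and>
              subordinate (log_deriv_quot f) (\<lambda>z. 1 + z + z\<^sup>2 / 2)}"

end

theory Submission
  imports Defs "HOL-Complex_Analysis.Cauchy_Integral_Formula"
begin

text \<open>
  For \<open>f z = z + \<Sum> a\<^sub>n z\<^sup>n\<close> and \<open>r = |z|\<close> one has
  \<open>|z f' z - f z| \<le> \<Sum> (n - 1) |a\<^sub>n| r\<^sup>n\<close> and \<open>|f z| \<ge> r - \<Sum> |a\<^sub>n| r\<^sup>n\<close>, so
  \<open>2 |z f' z - f z| - |f z| \<le> \<Sum> (2n - 1) |a\<^sub>n| r\<^sup>n - r \<le> r\<^sup>2 - r < 0\<close>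
  under the coefficient condition; that is, \<open>z f'/f\<close> stays in the disk \<open>|p - 1| < 1/2\<close>.
  Since \<open>\<phi> w = 1 + w + w\<^sup>2/2 = ((1 + w)\<^sup>2 + 1)/2\<close>, this disk is covered by \<open>\<phi>\<close> through the
  holomorphic inverse \<open>p \<mapsto> \<surd>(2p - 1) - 1\<close>, which gives the subordination.

  For \<open>z + c z\<^sup>n\<close> the condition is also necessary: if \<open>|c| > 1/(2n - 1)\<close>, then at a
  point with \<open>c z\<^bsup>n-1\<^esup> = -s\<close> the quotient \<open>z f'/f = (1 - ns)/(1 - s)\<close> is real and
  below \<open>1/2\<close>, whereas \<open>\<phi>\<close> maps the disk to no real number \<open>\<le> 1/2\<close>:
  \<open>(1 + w)\<^sup>2 \<le> 0\<close> forces \<open>Re w = -1\<close>.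
\<close>

lemma sums_shift_zero_prefix_iff:
  fixes f :: "nat \<Rightarrow> 'a::real_normed_vector"
  assumes "\<And>i. i < k \<Longrightarrow> f i = 0"
  shows "(\<lambda>n. f (n + k)) sums s \<longleftrightarrow> f sums s"
proof -
  have "(\<Sum>i<k. f i) = 0"
    using assms by simp
  then show ?thesis
    unfolding sums_iff_shift by simp
qed

lemma z_times_deriv_power_series_sums:
  fixes c :: "nat \<Rightarrow> 'a::{real_normed_field,banach}"
  assumes sm: "summable (\<lambda>n. c n * K ^ n)" and z: "norm z < norm K"
  shows "(\<lambda>n. of_nat n * c n * z ^ n) sums (z * deriv (\<lambda>x. \<Sum>n. c n * x ^ n) z)"
proof -
  have deriv_eq: "deriv (\<lambda>x. \<Sum>n. c n * x ^ n) z = (\<Sum>n. diffs c n * z ^ n)"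
    using termdiffs_strong[OF sm z] by (rule DERIV_imp_deriv)
  have "(\<lambda>n. of_nat n * c n * z ^ (n - Suc 0)) sums (\<Sum>n. diffs c n * z ^ n)"
    by (rule diffs_equiv, rule termdiff_converges[where K = "norm K"])
      (use z powser_inside[OF sm] in auto)
  then have "(\<lambda>n. z * (of_nat n * c n * z ^ (n - Suc 0))) sums (z * deriv (\<lambda>x. \<Sum>n. c n * x ^ n) z)"
    unfolding deriv_eq by (rule sums_mult)
  moreover have "z * (of_nat n * c n * z ^ (n - Suc 0)) = of_nat n * c n * z ^ n" for n
    by (cases n) (simp_all add: algebra_simps)
  ultimately show ?thesis
    by simp
qed

lemma sums_z_times_deriv_minus:
  fixes f :: "complex \<Rightarrow> complex"
  assumes f: "\<forall>x\<in>ball 0 1. f x = x + (\<Sum>n. c n * x ^ n)"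
    and c: "summable c" and z: "norm z < 1"
  shows "(\<lambda>n. (of_nat n - 1) * c n * z ^ n) sums (z * deriv f z - f z)"
proof -
  define F where "F = (\<lambda>x. \<Sum>n. c n * x ^ n)"
  have c1: "summable (\<lambda>n. c n * 1 ^ n)"
    using c by simp
  have "eventually (\<lambda>x. f x = x + F x) (nhds z)"
    using eventually_nhds_in_open[of "ball 0 1" z] z f
    by (auto simp: F_def elim!: eventually_mono)
  then have "deriv f z = deriv (\<lambda>x. x + F x) z"
    by (rule deriv_cong_ev) simp
  also have "\<dots> = 1 + deriv F z"
  proof -
    have "F field_differentiable at z"
      using termdiffs_strong[OF c1, of z] z unfolding F_def field_differentiable_def by auto
    then show ?thesis
      using deriv_add[OF field_differentiable_ident] by simp
  qed
  finally have "z * deriv f z - f z = z * deriv F z - F z"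
    using f z by (simp add: F_def algebra_simps)
  moreover have "(\<lambda>n. of_nat n * c n * z ^ n) sums (z * deriv F z)"
    unfolding F_def using z_times_deriv_power_series_sums[OF c1, of z] z by simp
  moreover have "(\<lambda>n. c n * z ^ n) sums F z"
    unfolding F_def by (rule summable_sums, rule powser_inside[OF c1]) (use z in simp)
  ultimately have "(\<lambda>n. of_nat n * c n * z ^ n - c n * z ^ n) sums (z * deriv f z - f z)"
    using sums_diff by metis
  then show ?thesis
    by (simp add: algebra_simps)
qed

lemma summable_mult_power_le:
  fixes w :: "nat \<Rightarrow> real"
  assumes w: "summable w" "\<And>n. 0 \<le> w n" and w_vanish: "\<And>n. n < k \<Longrightarrow> w n = 0"
    and r: "0 \<le> r" "r \<le> 1"
  shows "summable (\<lambda>n. w n * r ^ n)" and "(\<Sum>n. w n * r ^ n) \<le> r ^ k * suminf w"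
proof -
  have le: "w n * r ^ n \<le> r ^ k * w n" for n
  proof (cases "n < k")
    case False
    then have "r ^ n \<le> r ^ k"
      using r by (intro power_decreasing) auto
    then show ?thesis
      using w(2)[of n] by (simp add: mult_left_mono mult.commute)
  qed (simp add: w_vanish)
  have "summable (\<lambda>n. r ^ k * w n)"
    using w(1) by (rule summable_mult)
  moreover show "summable (\<lambda>n. w n * r ^ n)"
    by (rule summable_comparison_test'[OF calculation]) (use le w(2) r in auto)
  ultimately have "(\<Sum>n. w n * r ^ n) \<le> (\<Sum>n. r ^ k * w n)"
    by (intro suminf_le le)
  then show "(\<Sum>n. w n * r ^ n) \<le> r ^ k * suminf w"
    by (simp add: suminf_mult[OF w(1)])
qed

lemma norm_suminf_scaled_add_le:
  fixes e g :: "nat \<Rightarrow> 'a::banach"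
  assumes a: "0 < a" and T: "summable T" and le: "\<And>n. a * norm (e n) + norm (g n) \<le> T n"
  shows "a * norm (suminf e) + norm (suminf g) \<le> suminf T"
proof -
  have "0 \<le> a * norm (e n)" for n
    using a by simp
  then have "a * norm (e n) \<le> T n" and g_le: "norm (g n) \<le> T n" for n
    using le[of n] norm_ge_zero[of "g n"] by (smt (verit))+
  then have e_le: "norm (e n) \<le> T n / a" for n
    using a by (simp add: pos_le_divide_eq mult.commute)
  have e_summable: "summable (\<lambda>n. norm (e n))"
    by (rule summable_comparison_test'[OF summable_divide[OF T]]) (use e_le in auto)
  have g_summable: "summable (\<lambda>n. norm (g n))"
    by (rule summable_comparison_test'[OF T]) (use g_le in auto)
  have "a * norm (suminf e) + norm (suminf g) \<le> a * (\<Sum>n. norm (e n)) + (\<Sum>n. norm (g n))"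
    using summable_norm[OF e_summable] summable_norm[OF g_summable] a
    by (intro add_mono mult_left_mono) auto
  also have "\<dots> = (\<Sum>n. a * norm (e n) + norm (g n))"
    using suminf_add[OF summable_mult[OF e_summable] g_summable] suminf_mult[OF e_summable]
    by simp
  also have "\<dots> \<le> suminf T"
    using e_summable g_summable T le by (intro suminf_le summable_add summable_mult) auto
  finally show ?thesis .
qed

lemma twice_norm_pred_coeff_series_add_norm_lt:
  fixes c :: "nat \<Rightarrow> complex"
  assumes c0: "c 0 = 0" and c1: "c 1 = 0"
    and weighted_summable: "summable (\<lambda>n. (2 * real n - 1) * norm (c n))"
    and weighted_le: "(\<Sum>n. (2 * real n - 1) * norm (c n)) \<le> 1"
    and z: "norm z < 1" "z \<noteq> 0"
  shows "2 * norm (\<Sum>n. (of_nat n - 1) * c n * z ^ n) + norm (\<Sum>n. c n * z ^ n) < norm z"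
proof -
  define r where "r = norm z"
  define W where "W = (\<lambda>n. (2 * real n - 1) * norm (c n))"
  have r: "0 < r" "r < 1"
    using z by (auto simp: r_def)
  have c_or_2: "c n = 0 \<or> 2 \<le> n" for n
    using c0 c1 less_2_cases_iff[of n] by auto
  have W_nonneg: "0 \<le> W n" and W_vanish: "n < 2 \<Longrightarrow> W n = 0" for n
    using c_or_2[of n] by (auto simp: W_def)
  have W_summable: "summable W"
    using weighted_summable by (simp add: W_def)
  have "0 \<le> r" "r \<le> 1"
    using r by auto
  note W_power = summable_mult_power_le[where k = 2, OF W_summable W_nonneg W_vanish this]
  have "2 * norm ((of_nat n - 1) * c n * z ^ n) + norm (c n * z ^ n) = W n * r ^ n" for n
  proof (cases "c n = 0")
    case False
    then have "norm (of_nat n - 1 :: complex) = real n - 1"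
      using c_or_2[of n] by (metis norm_of_nat of_nat_1 of_nat_diff one_le_numeral order_trans)
    then have "norm ((of_nat n - 1) * c n * z ^ n) = (real n - 1) * norm (c n) * r ^ n"
      by (simp add: r_def norm_mult norm_power)
    then show ?thesis
      by (simp add: W_def r_def norm_mult norm_power algebra_simps)
  qed (simp add: W_def)
  then have "2 * norm (\<Sum>n. (of_nat n - 1) * c n * z ^ n) + norm (\<Sum>n. c n * z ^ n)
               \<le> (\<Sum>n. W n * r ^ n)"
    by (intro norm_suminf_scaled_add_le W_power(1)) auto
  also have "\<dots> \<le> r\<^sup>2 * suminf W"
    using W_power(2) by simp
  also have "\<dots> \<le> r\<^sup>2"
    using weighted_le by (simp add: W_def mult_left_le)
  also have "\<dots> < r"
    using r by (simp add: power2_eq_square)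
  finally show ?thesis
    by (simp add: r_def)
qed

lemma twice_norm_z_times_deriv_minus_lt:
  fixes f :: "complex \<Rightarrow> complex" and c :: "nat \<Rightarrow> complex"
  assumes f: "\<forall>x\<in>ball 0 1. f x = x + (\<Sum>n. c n * x ^ n)"
    and c0: "c 0 = 0" and c1: "c 1 = 0"
    and weighted_summable: "summable (\<lambda>n. (2 * real n - 1) * norm (c n))"
    and weighted_le: "(\<Sum>n. (2 * real n - 1) * norm (c n)) \<le> 1"
    and z: "norm z < 1" "z \<noteq> 0"
  shows "2 * norm (z * deriv f z - f z) < norm (f z)"
proof -
  have "norm (c n) \<le> (2 * real n - 1) * norm (c n)" for n
    using c0 c1 less_2_cases_iff[of n] by (cases "n < 2") (auto simp: mult_le_cancel_right1)
  then have "summable c"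
    by (intro summable_comparison_test'[OF weighted_summable]) auto
  then have "(\<Sum>n. (of_nat n - 1) * c n * z ^ n) = z * deriv f z - f z"
    using f z by (intro sums_unique[symmetric] sums_z_times_deriv_minus) auto
  moreover have "norm z - norm (\<Sum>n. c n * z ^ n) \<le> norm (f z)"
    using f z norm_triangle_ineq2[of z "- (\<Sum>n. c n * z ^ n)"] by simp
  ultimately show ?thesis
    using twice_norm_pred_coeff_series_add_norm_lt[OF c0 c1 weighted_summable weighted_le z]
    by simp
qed

lemma norm_csqrt_minus_one_lt:
  assumes "norm (u - 1) < 1"
  shows "norm (csqrt u - 1) < 1"
proof -
  define s where "s = csqrt u"
  have "norm (s - 1) \<le> norm (s + 1)"
    using Re_csqrt[of u] by (simp add: s_def cmod_def power2_eq_square algebra_simps)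
  then have "norm (s - 1) ^ 2 \<le> norm ((s - 1) * (s + 1))"
    by (simp add: power2_eq_square norm_mult mult_left_mono)
  also have "(s - 1) * (s + 1) = u - 1"
    by (simp add: s_def algebra_simps power2_eq_square[symmetric])
  finally have "norm (s - 1) ^ 2 < 1"
    using assms by linarith
  then show ?thesis
    by (simp add: s_def power_less_one_iff)
qed

lemma subordinate_car_if_norm_lt_half:
  fixes p :: "complex \<Rightarrow> complex"
  assumes p: "p holomorphic_on ball 0 1" "p 0 = 1"
    and close: "\<forall>z\<in>ball 0 1. norm (p z - 1) < 1/2"
  shows "subordinate p (\<lambda>z. 1 + z + z\<^sup>2 / 2)"
proof -
  define w where "w = (\<lambda>z. csqrt (2 * p z - 1) - 1)"
  have near: "norm ((2 * p z - 1) - 1) < 1" if "z \<in> ball 0 1" for z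
  proof -
    have "norm (p z - 1) < 1/2"
      using close that by simp
    then have "norm (2 * (p z - 1)) < 1"
      unfolding norm_mult by simp
    then show ?thesis
      by (simp add: algebra_simps)
  qed
  have "w holomorphic_on ball 0 1"
    unfolding w_def
  proof (intro holomorphic_intros p(1))
    fix z :: complex
    assume "z \<in> ball 0 1"
    then have "\<bar>Re (2 * p z - 1 - 1)\<bar> < 1"
      using near abs_Re_le_cmod le_less_trans by blast
    then show "2 * p z - 1 \<notin> \<real>\<^sub>\<le>\<^sub>0"
      by (auto simp: complex_nonpos_Reals_iff)
  qed
  moreover have "w ` ball 0 1 \<subseteq> ball 0 1"
    using near norm_csqrt_minus_one_lt by (auto simp: w_def)
  moreover have "w 0 = 0"
    by (simp add: w_def p(2))
  moreover have "p z = 1 + w z + (w z)\<^sup>2 / 2" for z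
  proof -
    have "1 + w z + (w z)\<^sup>2 / 2 = ((csqrt (2 * p z - 1))\<^sup>2 + 1) / 2"
      by (simp add: w_def field_simps power2_eq_square)
    then show ?thesis
      by simp
  qed
  ultimately show ?thesis
    unfolding subordinate_def by blast
qed

lemma log_deriv_quot_holomorphic:
  assumes f: "f \<in> class_A" and nonzero: "\<forall>z\<in>ball 0 1 - {0}. f z \<noteq> 0"
  shows "log_deriv_quot f holomorphic_on ball 0 1"
proof -
  have hol: "f holomorphic_on ball 0 1" and f0: "f 0 = 0" and df0: "deriv f 0 = 1"
    using f by (auto simp: class_A_def)
  define g where "g = (\<lambda>z. if z = 0 then deriv f 0 else (f z - f 0) / (z - 0))"
  have "g holomorphic_on ball 0 1"
    unfolding g_def by (rule pole_lemma_open[OF hol]) simp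
  moreover have "g z \<noteq> 0" if "z \<in> ball 0 1" for z
    using nonzero that by (auto simp: g_def df0 f0)
  ultimately have "(\<lambda>z. deriv f z / g z) holomorphic_on ball 0 1"
    by (intro holomorphic_intros holomorphic_deriv hol) auto
  moreover have "deriv f z / g z = log_deriv_quot f z" if "z \<in> ball 0 1" for z
    using nonzero that by (auto simp: g_def df0 f0 log_deriv_quot_def)
  ultimately show ?thesis
    by (rule holomorphic_transform)
qed

lemma S_car_if_twice_norm_lt:
  assumes f: "f \<in> class_A"
    and bound: "\<And>z. z \<in> ball 0 1 \<Longrightarrow> z \<noteq> 0 \<Longrightarrow> 2 * norm (z * deriv f z - f z) < norm (f z)"
  shows "f \<in> S_car"
proof -
  have nonzero: "\<forall>z\<in>ball 0 1 - {0}. f z \<noteq> 0"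
    using bound by fastforce
  have "norm (log_deriv_quot f z - 1) < 1/2" if "z \<in> ball 0 1" for z
  proof (cases "z = 0")
    case False
    then have "log_deriv_quot f z - 1 = (z * deriv f z - f z) / f z"
      using nonzero that by (simp add: log_deriv_quot_def field_simps)
    then have "norm (log_deriv_quot f z - 1) = norm (z * deriv f z - f z) / norm (f z)"
      by (simp add: norm_divide)
    also have "\<dots> < 1/2"
      using bound[OF that False] nonzero that False by (subst pos_divide_less_eq) auto
    finally show ?thesis .
  qed (simp add: log_deriv_quot_def)
  then have "subordinate (log_deriv_quot f) (\<lambda>z. 1 + z + z\<^sup>2 / 2)"
    using log_deriv_quot_holomorphic[OF f nonzero]
    by (intro subordinate_car_if_norm_lt_half) (auto simp: log_deriv_quot_def)
  then show ?thesis
    using f nonzero by (simp add: S_car_def)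
qed

lemma S_car_if_weighted_coeff_sum_le_1:
  fixes f :: "complex \<Rightarrow> complex" and a :: "nat \<Rightarrow> complex"
  assumes f: "f \<in> class_A" "\<forall>z\<in>ball 0 1. f z = z + (\<Sum>n. a (n + 2) * z ^ (n + 2))"
    and a_summable: "summable (\<lambda>n. (2 * real (n + 2) - 1) * norm (a (n + 2)))"
    and a_le: "(\<Sum>n. (2 * real (n + 2) - 1) * norm (a (n + 2))) \<le> 1"
  shows "f \<in> S_car"
proof -
  define c where "c n = (if 2 \<le> n then a n else 0)" for n
  have "(\<lambda>n. (2 * real n - 1) * norm (c n)) sums (\<Sum>n. (2 * real (n + 2) - 1) * norm (a (n + 2)))"
    using summable_sums[OF a_summable]
      sums_shift_zero_prefix_iff[of 2 "\<lambda>n. (2 * real n - 1) * norm (c n)"]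
    by (simp add: c_def)
  then have c_summable: "summable (\<lambda>n. (2 * real n - 1) * norm (c n))"
    and c_le: "(\<Sum>n. (2 * real n - 1) * norm (c n)) \<le> 1"
    using a_le by (auto simp: sums_iff)
  have "f z = z + (\<Sum>n. c n * z ^ n)" if z: "z \<in> ball 0 1" for z
  proof -
    have "norm (a (n + 2) * z ^ (n + 2)) \<le> (2 * real (n + 2) - 1) * norm (a (n + 2))" for n
    proof -
      have "norm z ^ (n + 2) \<le> 1"
        using z by (intro power_le_one) auto
      then have "norm (a (n + 2) * z ^ (n + 2)) \<le> norm (a (n + 2))"
        unfolding norm_mult norm_power by (rule mult_left_le) simp
      also have "\<dots> \<le> (2 * real (n + 2) - 1) * norm (a (n + 2))"
        by (simp add: mult_le_cancel_right1)
      finally show ?thesis .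
    qed
    then have "summable (\<lambda>n. a (n + 2) * z ^ (n + 2))"
      by (rule summable_comparison_test'[OF a_summable])
    then have "(\<lambda>n. c n * z ^ n) sums (\<Sum>n. a (n + 2) * z ^ (n + 2))"
      by (intro sums_shift_zero_prefix_iff[of 2 "\<lambda>n. c n * z ^ n", THEN iffD1])
        (simp_all add: c_def summable_sums)
    then show ?thesis
      using f(2) z by (simp add: sums_iff)
  qed
  then show ?thesis
    using twice_norm_z_times_deriv_minus_lt[of f c, OF _ _ _ c_summable c_le]
    by (intro S_car_if_twice_norm_lt f(1)) (auto simp: c_def)
qed

lemma deriv_z_plus_monomial:
  "deriv (\<lambda>z. z + c * z ^ n) z = 1 + c * (of_nat n * z ^ (n - 1))"
  by (rule DERIV_imp_deriv) (auto intro!: derivative_eq_intros)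

lemma z_plus_monomial_in_class_A:
  assumes "2 \<le> n"
  shows "(\<lambda>z. z + c * z ^ n) \<in> class_A"
  using assms by (auto simp: class_A_def deriv_z_plus_monomial intro!: holomorphic_intros)

lemma log_deriv_quot_z_plus_monomial:
  assumes "z \<noteq> 0" "1 \<le> n"
  shows "log_deriv_quot (\<lambda>z. z + c * z ^ n) z
           = (1 + of_nat n * (c * z ^ (n - 1))) / (1 + c * z ^ (n - 1))"
proof -
  define u where "u = c * z ^ (n - 1)"
  have "z ^ n = z * z ^ (n - 1)"
    using assms(2) by (simp add: power_eq_if)
  then have "log_deriv_quot (\<lambda>z. z + c * z ^ n) z = (z * (1 + of_nat n * u)) / (z * (1 + u))"
    using assms(1) by (simp add: log_deriv_quot_def deriv_z_plus_monomial u_def algebra_simps)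
  also have "\<dots> = (1 + of_nat n * u) / (1 + u)"
    using assms(1) by (rule mult_divide_mult_cancel_left)
  finally show ?thesis
    by (simp add: u_def)
qed

lemma car_real_value_gt_half:
  assumes "norm w < 1" "1 + w + w\<^sup>2 / 2 = complex_of_real x"
  shows "1/2 < x"
proof (rule ccontr)
  assume "\<not> 1/2 < x"
  define v where "v = w + 1"
  have "v\<^sup>2 = complex_of_real (2 * x - 1)"
    using assms(2) by (simp add: v_def field_simps power2_eq_square)
  then have re: "Re v * Re v - Im v * Im v = 2 * x - 1" and im: "Re v * Im v = 0"
    by (auto simp: power2_eq_square dest: arg_cong[of _ _ Re] arg_cong[of _ _ Im])
  have "Re v = 0"
  proof (rule ccontr)
    assume "Re v \<noteq> 0"
    then have "0 < Re v * Re v"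
      by (metis not_real_square_gt_zero)
    moreover have "Im v = 0"
      using im \<open>Re v \<noteq> 0\<close> by simp
    ultimately show False
      using re \<open>\<not> 1/2 < x\<close> by simp
  qed
  then have "1 \<le> norm w"
    using abs_Re_le_cmod[of w] by (simp add: v_def)
  then show False
    using assms(1) by simp
qed

lemma z_plus_monomial_in_S_car:
  assumes n: "2 \<le> n" and c: "norm c \<le> 1 / (2 * real n - 1)"
  shows "(\<lambda>z. z + c * z ^ n) \<in> S_car"
proof -
  define a where "a k = (if k = n then c else 0)" for k
  obtain m where m: "n = m + 2"
    using n by (metis add.commute le_add_diff_inverse)
  have series: "z + c * z ^ n = z + (\<Sum>k. a (k + 2) * z ^ (k + 2))" for z
  proof -
    have "(\<lambda>k. a (k + 2) * z ^ (k + 2)) = (\<lambda>k. if k = m then c * z ^ n else 0)"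
      by (rule ext) (simp add: a_def m)
    then show ?thesis
      using sums_single[of m "\<lambda>_. c * z ^ n"] by (simp add: sums_iff)
  qed
  have "(\<lambda>k. (2 * real (k + 2) - 1) * norm (a (k + 2)))
          = (\<lambda>k. if k = m then (2 * real n - 1) * norm c else 0)"
    by (rule ext) (simp add: a_def m)
  then have weighted: "(\<lambda>k. (2 * real (k + 2) - 1) * norm (a (k + 2))) sums ((2 * real n - 1) * norm c)"
    using sums_single[of m "\<lambda>_. (2 * real n - 1) * norm c"] by simp
  show ?thesis
  proof (rule S_car_if_weighted_coeff_sum_le_1[where a = a])
    show "(\<lambda>z. z + c * z ^ n) \<in> class_A"
      using n by (rule z_plus_monomial_in_class_A)
    show "\<forall>z\<in>ball 0 1. z + c * z ^ n = z + (\<Sum>k. a (k + 2) * z ^ (k + 2))"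
      using series by blast
    show "summable (\<lambda>k. (2 * real (k + 2) - 1) * norm (a (k + 2)))"
      using weighted by (rule sums_summable)
    have "(2 * real n - 1) * norm c \<le> 1"
      using n c by (simp add: field_simps)
    then show "(\<Sum>k. (2 * real (k + 2) - 1) * norm (a (k + 2))) \<le> 1"
      using sums_unique[OF weighted] by simp
  qed
qed

lemma z_plus_monomial_log_deriv_quot_attains:
  assumes n: "2 \<le> n" and s: "0 < s" "s < norm c"
  obtains z where "norm z < 1"
    and "log_deriv_quot (\<lambda>z. z + c * z ^ n) z = of_real ((1 - real n * s) / (1 - s))"
proof -
  have "c \<noteq> 0"
    using s by auto
  obtain z where z_root: "- of_real s / c = z ^ (n - 1)"
    by (rule exists_complex_root[of "n - 1"]) (use n in auto)
  have u: "c * z ^ (n - 1) = - of_real s"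
    using z_root \<open>c \<noteq> 0\<close> by (simp add: field_simps)
  have "norm z ^ (n - 1) = s / norm c"
    using arg_cong[OF z_root, of norm] s by (simp add: norm_divide norm_power)
  then have "norm z ^ (n - 1) < 1"
    using s by (simp add: divide_less_eq)
  then have "norm z < 1"
    using n by (simp add: power_less_one_iff)
  moreover have "z \<noteq> 0"
    using u s n by (auto simp: power_0_left)
  then have "log_deriv_quot (\<lambda>z. z + c * z ^ n) z = of_real ((1 - real n * s) / (1 - s))"
    using log_deriv_quot_z_plus_monomial[of z n c] n u by simp
  ultimately show ?thesis
    using that by blast
qed

lemma norm_coeff_le_if_z_plus_monomial_in_S_car:
  assumes n: "2 \<le> n" and f: "(\<lambda>z. z + c * z ^ n) \<in> S_car"
  shows "norm c \<le> 1 / (2 * real n - 1)"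
proof (rule ccontr)
  assume "\<not> ?thesis"
  with n have "1 / (2 * real n - 1) < min (norm c) 1"
    by (simp add: field_simps)
  then obtain s where s: "1 / (2 * real n - 1) < s" "s < norm c" "s < 1"
    using dense by (metis min_less_iff_conj)
  have "0 < 1 / (2 * real n - 1)"
    using n by simp
  with s obtain z where z: "norm z < 1"
    and z_value: "log_deriv_quot (\<lambda>z. z + c * z ^ n) z = of_real ((1 - real n * s) / (1 - s))"
    using z_plus_monomial_log_deriv_quot_attains[OF n] by (metis order.strict_trans)
  obtain w where "w ` ball 0 1 \<subseteq> ball 0 1"
    and "\<forall>x\<in>ball 0 1. log_deriv_quot (\<lambda>z. z + c * z ^ n) x = 1 + w x + (w x)\<^sup>2 / 2"
    using f by (auto simp: S_car_def subordinate_def)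
  with z z_value have "1/2 < (1 - real n * s) / (1 - s)"
    by (intro car_real_value_gt_half[of "w z"]) (auto simp: image_subset_iff)
  then show False
    using s n by (simp add: field_simps)
qed

theorem corollary3p3:
  shows "(\<forall>(f :: complex \<Rightarrow> complex) (a :: nat \<Rightarrow> complex).
            f \<in> class_A \<longrightarrow>
            (\<forall>z\<in>ball 0 1. f z = z + (\<Sum>n. a (n + 2) * z ^ (n + 2))) \<longrightarrow>
            summable (\<lambda>n. (2 * real (n + 2) - 1) * norm (a (n + 2))) \<longrightarrow>
            (\<Sum>n. (2 * real (n + 2) - 1) * norm (a (n + 2))) \<le> 1 \<longrightarrow>
            f \<in> S_car)
       \<and> (\<forall>(n :: nat) (c :: complex). n \<ge> 2 \<longrightarrow>
            ((\<lambda>z. z + c * z ^ n) \<in> S_car \<longleftrightarrow> norm c \<le> 1 / (2 * real n - 1)))"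
  by (auto intro: S_car_if_weighted_coeff_sum_le_1 z_plus_monomial_in_S_car
      norm_coeff_le_if_z_plus_monomial_in_S_car)

end
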